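(* Let $N,K$ be positive integers, $\mathcal{N}=\{1,\dots,N\}$, and let $\underline{\mathsf{d}}$ be uniformly distributed over $\mathcal{N}^K$. Then for every integer $s$ with $1\le s\le\lceil\min\{N,K\}/4\rceil$, \[ \Pr\bigl(w(\underline{\mathsf{d}})\ge s\bigr)\ge 2/3, \] where $w(\underline{\mathsf{d}})$ is the number of distinct entries of $\underline{\mathsf{d}}$. *)

theory Defs
  imports "HOL-Probability.Probability"
begin

text \<open>Sample space N^K: vectors d = (d_0,...,d_{K-1}) with entries in {1..N},
  represented as extensional functions on {..<K}.\<close>
definition demand_space :: "nat \<Rightarrow> nat \<Rightarrow> (nat \<Rightarrow> nat) set" where
  "demand_space N K = {..<K} \<rightarrow>\<^sub>E {1..N}"

definition w :: "nat \<Rightarrow> (nat \<Rightarrow> nat) \<Rightarrow> nat" where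
  "w K d = card (d ` {..<K})"

end

theory Submission
  imports Defs
begin

text \<open>If fewer than \<open>s\<close> distinct values occur, then with \<open>r = s - 1\<close> all entries lie in one
  \<open>r\<close>-subset of \<open>{1..N}\<close>, so at most \<open>(N choose r) r^K\<close> of the \<open>N^K\<close> vectors are bad.
  Using \<open>(N choose r) r^r \<le> (e N)^r\<close> and \<open>r \<le> N/4\<close>, this is at most
  \<open>N^K e^r / 4^(K - r)\<close>, and \<open>K \<ge> 4r + 1\<close> makes it at most \<open>N^K / 4\<close>.\<close>

lemma pow_div_fact_le_exp:
  fixes x :: real
  assumes "x \<ge> 0"
  shows "x ^ n / fact n \<le> exp x"
proof -
  have "(\<Sum>i\<in>{n}. x ^ i / fact i) \<le> (\<Sum>i. x ^ i / fact i)"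
    using summable_exp_generic[of x] assms
    by (intro sum_le_suminf) (auto simp: divide_inverse ac_simps)
  then show ?thesis
    by (simp add: exp_def divide_inverse ac_simps)
qed

lemma binomial_mult_pow_le_exp_pow:
  "real (n choose r) * real r ^ r \<le> (exp 1 * real n) ^ r"
proof -
  have choose_le: "real (n choose r) * fact r \<le> real n ^ r"
    using binomial_fact_pow[of n r] by (metis of_nat_fact of_nat_le_iff of_nat_mult of_nat_power)
  have "real r ^ r \<le> exp (real r) * fact r"
    using pow_div_fact_le_exp[of "real r" r] by (simp add: field_simps)
  then have "real (n choose r) * real r ^ r \<le> real (n choose r) * (exp (real r) * fact r)"
    by (intro mult_left_mono) auto
  also have "\<dots> \<le> exp (real r) * real n ^ r"
    using choose_le by (simp add: mult_left_mono ac_simps)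
  finally show ?thesis
    by (simp add: power_mult_distrib exp_of_nat_mult[symmetric])
qed

lemma binomial_mult_pow_le_quarter_pow:
  fixes n k r :: nat
  assumes "4 * r + 1 \<le> n" and "4 * r + 1 \<le> k"
  shows "4 * real (n choose r) * real r ^ k \<le> real n ^ k"
proof -
  have "exp (1::real) ^ r \<le> 64 ^ r"
    using exp_le by (intro power_mono) auto
  also have "4 * (64::real) ^ r = 4 ^ (3 * r + 1)"
    by (simp add: power_add power_mult)
  also have "\<dots> \<le> 4 ^ (k - r)"
    using assms by (intro power_increasing) auto
  finally have exp_le_pow4: "4 * exp 1 ^ r \<le> (4::real) ^ (k - r)"
    by simp
  have "(4 * real r) ^ (k - r) \<le> real n ^ (k - r)"
    using assms by (intro power_mono) auto
  then have r_le: "4 ^ (k - r) * real r ^ (k - r) \<le> real n ^ (k - r)"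
    by (simp only: power_mult_distrib)
  have "4 * real (n choose r) * real r ^ k
      = 4 * (real (n choose r) * real r ^ r) * real r ^ (k - r)"
    using assms by (simp flip: power_add)
  also have "\<dots> \<le> 4 * (exp 1 * real n) ^ r * real r ^ (k - r)"
    using binomial_mult_pow_le_exp_pow by (intro mult_right_mono mult_left_mono) auto
  also have "\<dots> = real n ^ r * ((4 * exp 1 ^ r) * real r ^ (k - r))"
    by (simp add: power_mult_distrib ac_simps)
  also have "\<dots> \<le> real n ^ r * (4 ^ (k - r) * real r ^ (k - r))"
    using exp_le_pow4 by (intro mult_right_mono mult_left_mono) auto
  also have "\<dots> \<le> real n ^ r * real n ^ (k - r)"
    using r_le by (intro mult_left_mono) auto
  also have "\<dots> = real n ^ k"
    using assms by (simp flip: power_add)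
  finally show ?thesis .
qed

lemma card_PiE_small_image_le:
  assumes "finite A" and "finite B" and "r \<le> card B"
  shows "card {f \<in> A \<rightarrow>\<^sub>E B. card (f ` A) \<le> r} \<le> (card B choose r) * r ^ card A"
proof -
  define F where "F = {S. S \<subseteq> B \<and> card S = r}"
  have "finite F"
    using assms(2) by (simp add: F_def)
  have "{f \<in> A \<rightarrow>\<^sub>E B. card (f ` A) \<le> r} \<subseteq> (\<Union>S\<in>F. A \<rightarrow>\<^sub>E S)"
  proof safe
    fix f assume f: "f \<in> A \<rightarrow>\<^sub>E B" and "card (f ` A) \<le> r"
    then obtain S where "f ` A \<subseteq> S" "S \<subseteq> B" "card S = r"
      using exists_subset_between[of "f ` A" r B] assms by auto
    with f show "f \<in> (\<Union>S\<in>F. A \<rightarrow>\<^sub>E S)"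
      by (auto simp: F_def PiE_iff)
  qed
  then have "card {f \<in> A \<rightarrow>\<^sub>E B. card (f ` A) \<le> r} \<le> card (\<Union>S\<in>F. A \<rightarrow>\<^sub>E S)"
    using \<open>finite F\<close> assms by (intro card_mono) (auto simp: F_def intro!: finite_PiE intro: finite_subset)
  also have "\<dots> \<le> (\<Sum>S\<in>F. card (A \<rightarrow>\<^sub>E S))"
    using \<open>finite F\<close> by (rule card_UN_le)
  also have "\<dots> = (\<Sum>S\<in>F. r ^ card A)"
    using assms(1) by (intro sum.cong) (auto simp: F_def card_PiE)
  also have "\<dots> = (card B choose r) * r ^ card A"
    using n_subsets[OF assms(2), of r] by (simp add: F_def)
  finally show ?thesis .
qed

lemma measure_pmf_of_set_eq_1_minus:
  assumes "finite S" and "S \<noteq> {}"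
  shows "measure_pmf.prob (pmf_of_set S) A = 1 - real (card (S - A)) / real (card S)"
proof -
  have "card (S \<inter> A) = card S - card (S - A)" and "card (S - A) \<le> card S"
    using assms(1) by (simp_all add: card_Diff_subset_Int Int_commute card_mono Diff_Int card_Int_Diff)
  then show ?thesis
    using assms by (simp add: measure_pmf_of_set of_nat_diff divide_simps)
qed

lemma card_demand_space: "card (demand_space N K) = N ^ K"
  unfolding demand_space_def by (simp add: card_PiE)

lemma finite_demand_space: "finite (demand_space N K)"
  unfolding demand_space_def by (simp add: finite_PiE)

theorem lemma2:
  fixes N K s :: nat
  assumes "N \<ge> 1" and "K \<ge> 1"
    and "1 \<le> s" and "real s \<le> real_of_int \<lceil>real (min N K) / 4\<rceil>"
  shows "measure_pmf.prob (pmf_of_set (demand_space N K)) {d. w K d \<ge> s} \<ge> 2 / 3"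
proof -
  define r where "r = s - 1"
  define Bad where "Bad = demand_space N K - {d. w K d \<ge> s}"
  have s_eq: "s = Suc r"
    using assms(3) by (simp add: r_def)
  have "real s < real (min N K) / 4 + 1"
    using assms(4) ceiling_less_iff[of "real (min N K) / 4"] by linarith
  then have r_bounds: "4 * r + 1 \<le> N" "4 * r + 1 \<le> K"
    by (simp_all add: s_eq)
  have "Bad = {d \<in> {..<K} \<rightarrow>\<^sub>E {1..N}. card (d ` {..<K}) \<le> r}"
    unfolding Bad_def demand_space_def w_def s_eq
    by (simp only: set_diff_eq mem_Collect_eq not_le less_Suc_eq_le)
  then have "card Bad \<le> (N choose r) * r ^ K"
    using card_PiE_small_image_le[of "{..<K}" "{1..N}" r] r_bounds by simp
  then have "4 * real (card Bad) \<le> 4 * real (N choose r) * real r ^ K"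
    by (simp flip: of_nat_mult of_nat_power)
  also have "\<dots> \<le> real N ^ K"
    using binomial_mult_pow_le_quarter_pow[OF r_bounds] .
  finally have "real (card Bad) / real (card (demand_space N K)) \<le> 1 / 4"
    using assms(1) by (simp add: card_demand_space field_simps)
  moreover have "demand_space N K \<noteq> {}"
    using card_demand_space[of N K] assms(1) by auto
  ultimately show ?thesis
    by (simp add: measure_pmf_of_set_eq_1_minus finite_demand_space Bad_def)
qed

end
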